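(* Let $I\ge 3$ and let $P=(p_{i,j})$ be any $I\times I$ matrix of the form $P=\alpha cr^t+(1-\alpha)\,\mathrm{diag}(\tfrac1I,\dots,\tfrac1I)$ with $r,c\in\mathbb{R}^I_{\ge0}$ each having entries summing to $1$ and $\alpha\in[0,1]$ (the common-diagonal-effect model in mixture form). Then each of the following polynomials vanishes at $P$: (a) for $i,j,k,l$ all distinct, $b_{ijkl}=p_{i,j}p_{k,l}-p_{i,l}p_{k,j}$; (b) for $i,j,k$ all distinct, $t_{ijk}=p_{i,j}p_{j,k}p_{k,i}-p_{i,k}p_{k,j}p_{j,i}$; (c) for two distinct pairs $(i,j)\ne(k,l)$ with $i\ne j$, $k\ne l$, and indices $m\in\{1,\dots,I\}\setminus\{i,j\}$, $n\in\{1,\dots,I\}\setminus\{k,l\}$ with $m\ne n$, $f_{ijklmn}=p_{i,j}p_{k,l}p_{n,n}-p_{i,j}p_{n,l}p_{k,n}-p_{i,j}p_{k,l}p_{m,m}+p_{k,l}p_{m,j}p_{i,m}$; (d) for distinct $i,j$ and $k\in\{1,\dots,I\}\setminus\{i,j\}$, $g_{ijk}=p_{i,j}p_{i,i}p_{k,k}+p_{i,j}p_{j,j}p_{k,k}-p_{i,j}p_{i,i}p_{j,j}-p_{i,j}p_{k,k}p_{k,k}+p_{k,k}p_{i,k}p_{k,j}-p_{i,i}p_{i,k}p_{k,j}+p_{i,j}^2p_{j,i}-p_{i,j}p_{k,j}p_{j,k}$; (e) for $i,j,k$ all distinct, $h_{ijk}=p_{i,i}p_{j,j}^2+p_{i,i}^2p_{k,k}+p_{j,j}p_{k,k}^2-p_{i,i}^2p_{j,j}-p_{j,j}^2p_{k,k}-p_{i,i}p_{k,k}^2+p_{i,i}p_{i,j}p_{j,i}-p_{i,i}p_{i,k}p_{k,i}+p_{j,j}p_{j,k}p_{k,j}-p_{j,j}p_{j,i}p_{i,j}+p_{k,k}p_{k,i}p_{i,k}-p_{k,k}p_{k,j}p_{j,k}$.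 That is, all these polynomials are invariants of the common-diagonal-effect model in mixture form.
   Context: An invariant of a model is a polynomial in the entries $p_{i,j}$ that vanishes at every point of the model. *)

theory Defs
  imports Complex_Main
begin

text \<open>Common-diagonal-effect model in mixture form: the I x I matrix
  P = alpha * c r^t + (1 - alpha) * diag(1/I, ..., 1/I), indices 0..I-1.\<close>
definition cde_matrix :: "nat \<Rightarrow> real \<Rightarrow> (nat \<Rightarrow> real) \<Rightarrow> (nat \<Rightarrow> real) \<Rightarrow> nat \<Rightarrow> nat \<Rightarrow> real" where
  "cde_matrix I \<alpha> r c i j = \<alpha> * c i * r j + (1 - \<alpha>) * (if i = j then 1 / real I else 0)"

end

theory Submission
  imports Defs
begin

text \<open>Every matrix of the model is a rank-one matrix \<open>u v\<^sup>T\<close> plus a scalar multiple \<open>d\<close> of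
  the identity, and the polynomials vanish identically on all such matrices: the index conditions
  fix which entries carry the summand \<open>d\<close>, after which each polynomial expands to zero.\<close>

locale rank_one_plus_scalar =
  fixes p :: "'a \<Rightarrow> 'a \<Rightarrow> real" and u v :: "'a \<Rightarrow> real" and d :: real
  assumes entry: "p i j = u i * v j + (if i = j then d else 0)"
begin

lemma invariant_b:
  assumes "distinct [i, j, k, l]"
  shows "p i j * p k l - p i l * p k j = 0"
  using assms by (auto simp: entry algebra_simps)

lemma invariant_t:
  assumes "distinct [i, j, k]"
  shows "p i j * p j k * p k i - p i k * p k j * p j i = 0"
  using assms by (auto simp: entry algebra_simps)

lemma invariant_f:
  assumes "(i, j) \<noteq> (k, l)" "i \<noteq> j" "k \<noteq> l" "m \<notin> {i, j}" "n \<notin> {k, l}" "m \<noteq> n"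
  shows "p i j * p k l * p n n - p i j * p n l * p k n - p i j * p k l * p m m
          + p k l * p m j * p i m = 0"
  using assms by (auto simp: entry algebra_simps)

lemma invariant_g:
  assumes "i \<noteq> j" "k \<notin> {i, j}"
  shows "p i j * p i i * p k k + p i j * p j j * p k k - p i j * p i i * p j j
          - p i j * p k k * p k k + p k k * p i k * p k j - p i i * p i k * p k j
          + (p i j)\<^sup>2 * p j i - p i j * p k j * p j k = 0"
  using assms by (auto simp: entry algebra_simps power2_eq_square)

lemma invariant_h:
  assumes "distinct [i, j, k]"
  shows "p i i * (p j j)\<^sup>2 + (p i i)\<^sup>2 * p k k + p j j * (p k k)\<^sup>2
          - (p i i)\<^sup>2 * p j j - (p j j)\<^sup>2 * p k k - p i i * (p k k)\<^sup>2
          + p i i * p i j * p j i - p i i * p i k * p k i + p j j * p j k * p k j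
          - p j j * p j i * p i j + p k k * p k i * p i k - p k k * p k j * p j k = 0"
  using assms by (auto simp: entry algebra_simps power2_eq_square)

end

lemma cde_matrix_rank_one_plus_scalar:
  "rank_one_plus_scalar (cde_matrix I \<alpha> r c) (\<lambda>i. \<alpha> * c i) r ((1 - \<alpha>) / real I)"
  by unfold_locales (simp add: cde_matrix_def)

theorem theorem5p1:
  fixes I :: nat and \<alpha> :: real and r c :: "nat \<Rightarrow> real"
  assumes "I \<ge> 3"
    and "\<forall>i<I. r i \<ge> 0" and "\<forall>i<I. c i \<ge> 0"
    and "(\<Sum>i<I. r i) = 1" and "(\<Sum>i<I. c i) = 1"
    and "0 \<le> \<alpha>" and "\<alpha> \<le> 1"
  defines "p \<equiv> cde_matrix I \<alpha> r c"
  shows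
    "(\<forall>i<I. \<forall>j<I. \<forall>k<I. \<forall>l<I. distinct [i, j, k, l] \<longrightarrow>
        p i j * p k l - p i l * p k j = 0)
   \<and> (\<forall>i<I. \<forall>j<I. \<forall>k<I. distinct [i, j, k] \<longrightarrow>
        p i j * p j k * p k i - p i k * p k j * p j i = 0)
   \<and> (\<forall>i<I. \<forall>j<I. \<forall>k<I. \<forall>l<I. \<forall>m<I. \<forall>n<I.
        (i, j) \<noteq> (k, l) \<and> i \<noteq> j \<and> k \<noteq> l \<and> m \<notin> {i, j} \<and> n \<notin> {k, l} \<and> m \<noteq> n \<longrightarrow>
        p i j * p k l * p n n - p i j * p n l * p k n - p i j * p k l * p m m
          + p k l * p m j * p i m = 0)
   \<and> (\<forall>i<I. \<forall>j<I. \<forall>k<I. i \<noteq> j \<and> k \<notin> {i, j} \<longrightarrow>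
        p i j * p i i * p k k + p i j * p j j * p k k - p i j * p i i * p j j
          - p i j * p k k * p k k + p k k * p i k * p k j - p i i * p i k * p k j
          + (p i j)\<^sup>2 * p j i - p i j * p k j * p j k = 0)
   \<and> (\<forall>i<I. \<forall>j<I. \<forall>k<I. distinct [i, j, k] \<longrightarrow>
        p i i * (p j j)\<^sup>2 + (p i i)\<^sup>2 * p k k + p j j * (p k k)\<^sup>2
          - (p i i)\<^sup>2 * p j j - (p j j)\<^sup>2 * p k k - p i i * (p k k)\<^sup>2
          + p i i * p i j * p j i - p i i * p i k * p k i + p j j * p j k * p k j
          - p j j * p j i * p i j + p k k * p k i * p i k - p k k * p k j * p j k = 0)"
proof -
  interpret rank_one_plus_scalar p "\<lambda>i. \<alpha> * c i" r "(1 - \<alpha>) / real I"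
    unfolding p_def by (rule cde_matrix_rank_one_plus_scalar)
  show ?thesis
    by (intro conjI allI impI; (elim conjE)?;
        rule invariant_b invariant_t invariant_f invariant_g invariant_h; assumption)
qed

end
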